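(* Let $n\ge 1$, $b\in\mathbb{R}^n$, and let $A\in\mathbb{R}^{n\times n}$ be symmetric with all eigenvalues $\lambda_i$ satisfying $0<\lambda_i<2$, $i=1,\dots,n$. Define $g(x)=x-(Ax-b)$ and $f(x)=g(x)-x=-(Ax-b)$. Let $\bar x_k\in\mathbb{R}^n$, $\bar d_k\in\mathbb{R}^n\setminus\{0\}$ and $\beta_k\in\mathbb{R}$ be arbitrary, and set $$x_{k+1}=\bar x_k+\beta_k\bar d_k,\qquad \hat\beta_k=\frac{\langle \bar d_k,\,g(x_{k+1})-\bar x_k\rangle}{\|\bar d_k\|^2},\qquad \hat x_{k+1}=\bar x_k+\hat\beta_k\bar d_k.$$ Then $$\|f(\hat x_{k+1})\|_{A^{-1}}\le \|f(x_{k+1})\|_{A^{-1}},$$ where $\|x\|_{A^{-1}}=\sqrt{x^\intercal A^{-1}x}$.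
   Context: $\|\cdot\|$ denotes the Euclidean norm on $\mathbb{R}^n$ and $\langle x,y\rangle=x^\intercal y$ the standard inner product. Since $A$ is symmetric positive definite, $\|x\|_{A^{-1}}=\sqrt{x^\intercal A^{-1}x}$ is a norm. In the paper, $\bar x_k$ and $\bar d_k=\bar y_k-\bar x_k$ arise from an Anderson acceleration step, and $\hat\beta_k$ is the value of $\beta$ minimizing $\|\bar x_k+\beta\bar d_k-g(x_{k+1})\|$. *)

theory Defs
  imports "HOL-Analysis.Analysis"
begin

definition is_eigenvalue :: "real^'n^'n \<Rightarrow> real \<Rightarrow> bool" where
  "is_eigenvalue A \<mu> \<longleftrightarrow> (\<exists>v. v \<noteq> 0 \<and> A *v v = \<mu> *\<^sub>R v)"

definition norm_Ainv :: "real^'n^'n \<Rightarrow> real^'n \<Rightarrow> real" where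
  "norm_Ainv A x = sqrt (x \<bullet> (matrix_inv A *v x))"

end

theory Submission
  imports Defs
begin

text \<open>On the line \<open>xbar + t dbar\<close> the residual \<open>f\<close> is affine, \<open>f = r - t A dbar\<close>, so
  the squared \<open>A\<^sup>-\<^sup>1\<close>-norm of \<open>f\<close> is the quadratic \<open>c - 2 t p + t\<^sup>2 a\<close> with \<open>p = dbar \<bullet> r\<close> and
  \<open>a = dbar \<bullet> A dbar\<close>. The coefficient \<open>beta_hat\<close> equals \<open>\<beta> + e\<close> with
  \<open>e = (p - \<beta> a) / \<parallel>dbar\<parallel>\<^sup>2\<close>, and the quadratic changes by \<open>e\<^sup>2 (a - 2 \<parallel>dbar\<parallel>\<^sup>2)\<close>,
  which is nonpositive because the Rayleigh quotient of \<open>A\<close> is bounded by its largest eigenvalue,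
  which is below 2.\<close>

lemma symmetric_matrix_inner_swap:
  fixes A :: "real^'n^'n"
  assumes "transpose A = A"
  shows "(A *v x) \<bullet> y = x \<bullet> (A *v y)"
  by (metis assms dot_lmul_matrix vector_transpose_matrix)

lemma psd_form_eq_0_imp_eq_0:
  fixes B :: "'a::real_inner \<Rightarrow> 'a"
  assumes lin: "linear B"
    and selfadj: "\<And>x y. x \<bullet> B y = y \<bullet> B x"
    and psd: "\<And>x. 0 \<le> x \<bullet> B x"
    and zero: "u \<bullet> B u = 0"
  shows "B u = 0"
proof -
  define v where "v = B u"
  define e where "e = v \<bullet> B v"
  have "0 \<le> (u + t *\<^sub>R v) \<bullet> B (u + t *\<^sub>R v)" for t
    by (rule psd)
  also have "(u + t *\<^sub>R v) \<bullet> B (u + t *\<^sub>R v) = 2 * t * (v \<bullet> v) + t\<^sup>2 * e" for t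
    using zero selfadj[of u v]
    by (simp add: linear_add[OF lin] linear_scale[OF lin] inner_add_right
        power2_eq_square algebra_simps v_def e_def)
  finally have key: "0 \<le> 2 * t * (v \<bullet> v) + t\<^sup>2 * e" for t .
  have "e \<ge> 0" by (simp add: e_def psd)
  have "0 \<le> (2 * (- (v \<bullet> v) / (e + 1)) * (v \<bullet> v) + (- (v \<bullet> v) / (e + 1))\<^sup>2 * e) * (e + 1)\<^sup>2"
    using key[of "- (v \<bullet> v) / (e + 1)"] by simp
  also have "\<dots> = - (v \<bullet> v)\<^sup>2 * (e + 2)"
    using \<open>e \<ge> 0\<close> by (simp add: divide_simps power2_eq_square) (simp add: algebra_simps)
  finally have "(v \<bullet> v)\<^sup>2 * (e + 2) \<le> 0" by simp
  with \<open>e \<ge> 0\<close> have "v \<bullet> v = 0"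
    by (smt (verit) mult_pos_pos zero_less_power2)
  thus ?thesis by (simp add: v_def)
qed

text \<open>The maximum of the Rayleigh quotient is attained on the unit sphere; at a maximiser \<open>u\<close>
  the form of \<open>\<mu> I - A\<close> is positive semidefinite and vanishes at \<open>u\<close>, so \<open>u\<close> is an eigenvector.\<close>

lemma symmetric_matrix_rayleigh_bound:
  fixes A :: "real^'n^'n"
  assumes symA: "transpose A = A"
  obtains \<mu> where "is_eigenvalue A \<mu>" and "\<And>x. x \<bullet> (A *v x) \<le> \<mu> * (x \<bullet> x)"
proof -
  let ?h = "\<lambda>x. x \<bullet> (A *v x)"
  have "sphere (0::real^'n) 1 \<noteq> {}"
    using norm_axis_1 by (metis mem_sphere_0 empty_iff)
  moreover have "continuous_on (sphere 0 1) ?h"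
    by (intro continuous_intros linear_continuous_on bounded_linear.linear) auto
  ultimately obtain u where u: "u \<in> sphere 0 1"
    and umax: "\<And>y. y \<in> sphere 0 1 \<Longrightarrow> ?h y \<le> ?h u"
    using continuous_attains_sup[OF compact_sphere] by blast
  define \<mu> where "\<mu> = ?h u"
  define B where "B x = \<mu> *\<^sub>R x - A *v x" for x
  have formB: "x \<bullet> B x = \<mu> * (x \<bullet> x) - ?h x" for x
    by (simp add: B_def inner_diff_right)
  have psd: "0 \<le> x \<bullet> B x" for x
  proof (cases "x = 0")
    case False
    define w where "w = (1 / norm x) *\<^sub>R x"
    have "w \<in> sphere 0 1" using False by (simp add: w_def)
    hence "?h w \<le> \<mu>" using umax by (simp add: \<mu>_def)
    moreover have "?h x = ?h w * (norm x)\<^sup>2"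
      using False by (simp add: w_def matrix_vector_mult_scaleR power2_eq_square)
    ultimately show ?thesis
      by (simp add: formB dot_square_norm mult_right_mono)
  qed simp
  have "linear B"
    by (simp add: B_def linear_iff algebra_simps matrix_vector_right_distrib matrix_vector_mult_scaleR)
  moreover have "x \<bullet> B y = y \<bullet> B x" for x y
    using symmetric_matrix_inner_swap[OF symA, of y x]
    by (simp add: B_def inner_diff_right inner_commute)
  moreover have "u \<bullet> B u = 0"
    using u by (simp add: formB \<mu>_def dot_square_norm)
  ultimately have "B u = 0" by (rule psd_form_eq_0_imp_eq_0[OF _ _ psd])
  moreover have "u \<noteq> 0" using u by auto
  ultimately have "is_eigenvalue A \<mu>"
    unfolding is_eigenvalue_def B_def by (metis eq_iff_diff_eq_0)
  moreover have "?h x \<le> \<mu> * (x \<bullet> x)" for x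
    using psd[of x] by (simp add: formB)
  ultimately show ?thesis by (rule that)
qed

lemma quadratic_form_le_eigenvalue_bound:
  fixes A :: "real^'n^'n"
  assumes "transpose A = A" and "\<And>\<mu>. is_eigenvalue A \<mu> \<Longrightarrow> \<mu> \<le> l"
  shows "x \<bullet> (A *v x) \<le> l * (x \<bullet> x)"
proof -
  obtain \<mu> where "is_eigenvalue A \<mu>" and "x \<bullet> (A *v x) \<le> \<mu> * (x \<bullet> x)"
    using symmetric_matrix_rayleigh_bound[OF assms(1)] by metis
  moreover have "\<mu> * (x \<bullet> x) \<le> l * (x \<bullet> x)"
    using assms(2)[OF \<open>is_eigenvalue A \<mu>\<close>] by (simp add: mult_right_mono)
  ultimately show ?thesis by linarith
qed

lemma invertible_if_not_eigenvalue_0: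
  fixes A :: "real^'n^'n"
  assumes "\<not> is_eigenvalue A 0"
  shows "invertible A"
proof -
  have "\<forall>x. A *v x = 0 \<longrightarrow> x = 0"
    using assms by (auto simp: is_eigenvalue_def)
  thus ?thesis
    using matrix_left_invertible_ker invertible_left_inverse by blast
qed

lemma matrix_inv_cancel:
  fixes A :: "'a::field^'n^'n"
  assumes "invertible A"
  shows "matrix_inv A *v (A *v x) = x" and "A *v (matrix_inv A *v x) = x"
proof -
  have "A ** matrix_inv A = mat 1 \<and> matrix_inv A ** A = mat 1"
    using assms unfolding invertible_def matrix_inv_def by (rule someI_ex)
  thus "matrix_inv A *v (A *v x) = x" and "A *v (matrix_inv A *v x) = x"
    by (simp_all add: matrix_vector_mul_assoc)
qed

lemma norm_Ainv_along_line:
  fixes A :: "real^'n^'n"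
  assumes symA: "transpose A = A" and inv: "invertible A"
  shows "norm_Ainv A (r - t *\<^sub>R (A *v d))
    = sqrt (r \<bullet> (matrix_inv A *v r) - 2 * t * (d \<bullet> r) + t\<^sup>2 * (d \<bullet> (A *v d)))"
proof -
  let ?M = "matrix_inv A"
  have "(A *v d) \<bullet> (?M *v r) = d \<bullet> r"
    by (simp add: symmetric_matrix_inner_swap[OF symA] matrix_inv_cancel[OF inv])
  thus ?thesis
    unfolding norm_Ainv_def
    by (simp add: matrix_vector_mult_diff_distrib matrix_vector_mult_scaleR matrix_inv_cancel[OF inv]
        inner_diff_left inner_diff_right power2_eq_square inner_commute algebra_simps)
qed

lemma quadratic_relaxation_step_le:
  fixes a c p D \<beta> :: real
  assumes "0 < D" and "a \<le> 2 * D"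
  shows "c - 2 * (\<beta> + (p - \<beta> * a) / D) * p + (\<beta> + (p - \<beta> * a) / D)\<^sup>2 * a
    \<le> c - 2 * \<beta> * p + \<beta>\<^sup>2 * a"
proof -
  define e where "e = (p - \<beta> * a) / D"
  have "c - 2 * (\<beta> + e) * p + (\<beta> + e)\<^sup>2 * a = (c - 2 * \<beta> * p + \<beta>\<^sup>2 * a) + e\<^sup>2 * (a - 2 * D)"
    using assms(1) by (simp add: e_def field_simps power2_eq_square)
  moreover have "e\<^sup>2 * (a - 2 * D) \<le> 0"
    using assms(2) by (simp add: mult_nonneg_nonpos)
  ultimately show ?thesis by (simp add: e_def)
qed

theorem theorem2:
  fixes A :: "real^'n^'n" and b xbar dbar :: "real^'n" and \<beta> :: real
    and g f :: "real^'n \<Rightarrow> real^'n"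
  assumes symA: "transpose A = A"
    and eig: "\<And>\<mu>. is_eigenvalue A \<mu> \<Longrightarrow> 0 < \<mu> \<and> \<mu> < 2"
    and g_def: "\<And>x. g x = x - (A *v x - b)"
    and f_def: "\<And>x. f x = g x - x"
    and d_nz: "dbar \<noteq> 0"
  shows "let x1 = xbar + \<beta> *\<^sub>R dbar;
             beta_hat = (dbar \<bullet> (g x1 - xbar)) / (norm dbar)^2;
             xhat1 = xbar + beta_hat *\<^sub>R dbar
         in norm_Ainv A (f xhat1) \<le> norm_Ainv A (f x1)"
proof -
  define r where "r = b - A *v xbar"
  define a where "a = dbar \<bullet> (A *v dbar)"
  define D where "D = dbar \<bullet> dbar"
  have inv: "invertible A"
    using eig by (intro invertible_if_not_eigenvalue_0) blast
  have aD: "a \<le> 2 * D"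
    unfolding a_def D_def using eig by (intro quadratic_form_le_eigenvalue_bound[OF symA]) (simp add: less_imp_le)
  have f_line: "f (xbar + t *\<^sub>R dbar) = r - t *\<^sub>R (A *v dbar)" for t
    by (simp add: f_def g_def r_def algebra_simps)
  have "dbar \<bullet> (g (xbar + \<beta> *\<^sub>R dbar) - xbar) = \<beta> * D + dbar \<bullet> r - \<beta> * a"
    by (simp add: g_def r_def a_def D_def algebra_simps inner_diff_right)
  hence beta_hat: "(dbar \<bullet> (g (xbar + \<beta> *\<^sub>R dbar) - xbar)) / (norm dbar)\<^sup>2
      = \<beta> + (dbar \<bullet> r - \<beta> * a) / D"
    using d_nz by (simp add: D_def dot_square_norm[symmetric] field_simps)
  show ?thesis
    unfolding Let_def beta_hat f_line norm_Ainv_along_line[OF symA inv]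
    using quadratic_relaxation_step_le[OF _ aD] d_nz by (simp add: D_def a_def)
qed

end
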